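(* Let $x^t$ and $\underline x_i^t$ be generated by RGEM or by stochastic RGEM (see context), and let $x\in X$. Suppose that for some $\theta_t\ge0$, $t=1,\dots,k$, \[ \theta_t\big(m(1+\tau_t)-1\big)=\theta_{t-1}m(1+\tau_{t-1}),\qquad t=2,\dots,k. \] Then \[ \sum_{t=1}^k\theta_t\mathbb{E}[Q(x^t,x)]\le\theta_k(1+\tau_k)\sum_{i=1}^m\mathbb{E}[f_i(\underline x_i^k)]+\sum_{t=1}^k\theta_t\mathbb{E}[\mu w(x^t)-\psi(x)]-\theta_1\big(m(1+\tau_1)-1\big)\big[\langle x^0-x,\nabla f(x)\rangle+f(x)\big], \] where $Q(\underline x,x):=\langle\nabla f(x),\underline x-x\rangle+\mu w(\underline x)-\mu w(x)$ and the expectation is over all random variables of the algorithm.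
   Context: $X\subseteq\mathbb{R}^n$ closed convex; $f_i:X\to\mathbb{R}$ convex and differentiable, $i=1,\dots,m$; $f=\frac1m\sum_i f_i$; $\mu\ge0$; $w:X\to\mathbb{R}$ strongly convex with modulus 1; $\psi=f+\mu w$. In the stochastic case $f_i(x)=\mathbb{E}[F_i(x,\xi_i)]$ and an oracle returns $G_i(x,\xi)$ with $\mathbb{E}[G_i(x,\xi)]=\nabla f_i(x)$. Prox-function $P(x^0,x):=w(x)-[w(x^0)+\langle w'(x^0),x-x^0\rangle]$, prox-mapping $\mathcal M_X(g,x^0,\eta):=\operatorname{argmin}_{x\in X}\{\langle g,x\rangle+\mu w(x)+\eta P(x^0,x)\}$. RGEM: given $x^0\in X$ and nonnegative $\{\alpha_t\},\{\eta_t\},\{\tau_t\}$, set $\underline x_i^0=x^0$, $y^{-1}=y^0=\mathbf 0\in(\mathbb{R}^n)^m$. For $t=1,\dots,k$: choose $i_t$ uniformly from $\{1,\dots,m\}$ independently; $\tilde y^t=y^{t-1}+\alpha_t(y^{t-1}-y^{t-2})$; $x^t=\mathcal M_X(\tfrac1m\sum_i\tilde y_i^t,x^{t-1},\eta_t)$; $\underline x_i^t=(1+\tau_t)^{-1}(x^t+\tau_t\underline x_i^{t-1})$ if $i=i_t$, else unchanged; $y_i^t=\nabla f_i(\underline x_i^t)$ if $i=i_t$, else $y_i^t=y_i^{t-1}$. Stochastic RGEM: same but for $i=i_t$, $y_i^t=\frac1{B_t}\sum_{j=1}^{B_t}G_i(\underline x_i^t,\xi_{i,j}^t)$ with fresh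 samples. *)

theory Defs
  imports "HOL-Analysis.Analysis" "HOL-Probability.Probability" "HOL-Library.FuncSet"
begin

definition strongly_convex_mod :: "'a::real_normed_vector set \<Rightarrow> ('a \<Rightarrow> real) \<Rightarrow> real \<Rightarrow> bool" where
  "strongly_convex_mod X w c \<longleftrightarrow> convex X \<and>
     (\<forall>x\<in>X. \<forall>y\<in>X. \<forall>u\<in>{0..1}.
        w ((1 - u) *\<^sub>R x + u *\<^sub>R y) \<le> (1 - u) * w x + u * w y - c / 2 * u * (1 - u) * (norm (x - y))\<^sup>2)"

definition prox_fun :: "('a::real_inner \<Rightarrow> real) \<Rightarrow> ('a \<Rightarrow> 'a) \<Rightarrow> 'a \<Rightarrow> 'a \<Rightarrow> real" where
  "prox_fun w w' x0 x = w x - (w x0 + inner (w' x0) (x - x0))"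

definition prox_obj :: "real \<Rightarrow> ('a::real_inner \<Rightarrow> real) \<Rightarrow> ('a \<Rightarrow> 'a) \<Rightarrow> 'a \<Rightarrow> 'a \<Rightarrow> real \<Rightarrow> 'a \<Rightarrow> real" where
  "prox_obj \<mu> w w' g x0 \<eta> x = inner g x + \<mu> * w x + \<eta> * prox_fun w w' x0 x"

text \<open>Prox-mapping M_X(g,x0,eta) := argmin over X of the prox objective
  (a fixed choice of minimizer; unique whenever the objective is strongly convex).\<close>
definition prox_map :: "'a::real_inner set \<Rightarrow> real \<Rightarrow> ('a \<Rightarrow> real) \<Rightarrow> ('a \<Rightarrow> 'a) \<Rightarrow> 'a \<Rightarrow> 'a \<Rightarrow> real \<Rightarrow> 'a" where
  "prox_map X \<mu> w w' g x0 \<eta> =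
     (SOME x. x \<in> X \<and> (\<forall>z\<in>X. prox_obj \<mu> w w' g x0 \<eta> x \<le> prox_obj \<mu> w w' g x0 \<eta> z))"

text \<open>State of (stochastic) RGEM after t iterations, for a realisation
  \<sigma> of the indices i_1,...,i_k (values in {1..m}) and a realisation s of the samples:
  (x^t, (\<lambda>i. underline x_i^t), (\<lambda>i. y_i^t), (\<lambda>i. y_i^{t-1})).
  If stoch is False, the update is y_i^t = grad f_i(underline x_i^t) (RGEM);
  if stoch is True, y_i^t = (1/B_t) sum_{j=1}^{B_t} G_i(underline x_i^t, xi^t_{i,j}) (stochastic RGEM),
  where \<xi> t i j s is the j-th fresh sample of component i at iteration t.\<close>
primrec rgem_state ::
  "'a::real_inner set \<Rightarrow> real \<Rightarrow> ('a \<Rightarrow> real) \<Rightarrow> ('a \<Rightarrow> 'a) \<Rightarrow> nat \<Rightarrow>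
   (nat \<Rightarrow> 'a \<Rightarrow> 'a) \<Rightarrow> bool \<Rightarrow> (nat \<Rightarrow> 'a \<Rightarrow> 'b \<Rightarrow> 'a) \<Rightarrow> (nat \<Rightarrow> nat) \<Rightarrow>
   (nat \<Rightarrow> nat \<Rightarrow> nat \<Rightarrow> 's \<Rightarrow> 'b) \<Rightarrow>
   (nat \<Rightarrow> real) \<Rightarrow> (nat \<Rightarrow> real) \<Rightarrow> (nat \<Rightarrow> real) \<Rightarrow> 'a \<Rightarrow>
   (nat \<Rightarrow> nat) \<Rightarrow> 's \<Rightarrow> nat \<Rightarrow> 'a \<times> (nat \<Rightarrow> 'a) \<times> (nat \<Rightarrow> 'a) \<times> (nat \<Rightarrow> 'a)" where
  "rgem_state X \<mu> w w' m grad stoch G B \<xi> \<alpha> \<eta> \<tau> x0 \<sigma> s 0 = (x0, (\<lambda>i. x0), (\<lambda>i. 0), (\<lambda>i. 0))"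
| "rgem_state X \<mu> w w' m grad stoch G B \<xi> \<alpha> \<eta> \<tau> x0 \<sigma> s (Suc t) =
    (case rgem_state X \<mu> w w' m grad stoch G B \<xi> \<alpha> \<eta> \<tau> x0 \<sigma> s t of (x, xl, y, yp) \<Rightarrow>
      let ytil = (\<lambda>i. y i + \<alpha> (Suc t) *\<^sub>R (y i - yp i));
          xn = prox_map X \<mu> w w' ((1 / real m) *\<^sub>R (\<Sum>i=1..m. ytil i)) x (\<eta> (Suc t));
          it = \<sigma> (Suc t);
          xln = xl(it := (1 / (1 + \<tau> (Suc t))) *\<^sub>R (xn + \<tau> (Suc t) *\<^sub>R xl it));
          yn = y(it := (if stoch
                        then (1 / real (B (Suc t))) *\<^sub>R (\<Sum>j=1..B (Suc t). G it (xln it) (\<xi> (Suc t) it j s))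
                        else grad it (xln it)))
      in (xn, xln, yn, y))"

text \<open>Expectation over all random variables of the algorithm: the indices
  i_1,...,i_k are uniform on {1..m} and independent of the samples (probability space S),
  so E[F] = integral over S of the average of F over all index sequences.\<close>
definition rgem_expect :: "'s measure \<Rightarrow> nat \<Rightarrow> nat \<Rightarrow> ((nat \<Rightarrow> nat) \<Rightarrow> 's \<Rightarrow> real) \<Rightarrow> real" where
  "rgem_expect S m k F = (\<integral>s. (\<Sum>\<sigma>\<in>{1..k} \<rightarrow>\<^sub>E {1..m}. F \<sigma> s) / real m ^ k \<partial>S)"

end

theory Submission
  imports Defs
begin

text \<open>
  Fix a realisation of the samples and average over the uniformly distributed indices.
  Only the component i = i_t of xl is updated and x^t does not depend on i_t, so
  m(1 + tau_t) E[xl_i^t] = E[x^t] + (m(1 + tau_t) - 1) E[xl_i^(t-1)].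
  The condition on theta_t makes the theta-weighted sum of these identities telescope,
  expressing theta_k m(1 + tau_k) E[xl_i^k] through the E[x^t] and x^0. Pairing with
  grad f_i(x) and using f_i(xl_i^k) \<ge> f_i(x) + <grad f_i(x), xl_i^k - x> gives the inequality
  for every realisation of the samples, and integration preserves it.
\<close>

lemma sum_PiE_split_coord:
  assumes "t \<in> A" "finite A" "finite B"
  shows "(\<Sum>\<sigma>\<in>A \<rightarrow>\<^sub>E B. H \<sigma>) = (\<Sum>g\<in>(A - {t}) \<rightarrow>\<^sub>E B. \<Sum>j\<in>B. H (g(t := j)))"
proof -
  have A: "A = insert t (A - {t})" using assms by auto
  have "(\<Sum>\<sigma>\<in>A \<rightarrow>\<^sub>E B. H \<sigma>) = (\<Sum>\<sigma>\<in>(\<lambda>(j, g). g(t := j)) ` (B \<times> ((A - {t}) \<rightarrow>\<^sub>E B)). H \<sigma>)"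
    by (subst A, subst PiE_insert_eq) simp
  also have "\<dots> = (\<Sum>(j, g)\<in>B \<times> ((A - {t}) \<rightarrow>\<^sub>E B). H (g(t := j)))"
    by (rule sum.reindex_cong[OF inj_combinator]) auto
  also have "\<dots> = (\<Sum>g\<in>(A - {t}) \<rightarrow>\<^sub>E B. \<Sum>j\<in>B. H (g(t := j)))"
    by (subst sum.cartesian_product[symmetric]) (rule sum.swap)
  finally show ?thesis .
qed

lemma sum_if_eq_else_const:
  fixes a b :: "'v::real_vector"
  assumes "i \<in> A" "finite A"
  shows "(\<Sum>j\<in>A. if j = i then a else b) = a + (real (card A) - 1) *\<^sub>R b"
proof -
  have "(\<Sum>j\<in>A. if j = i then a else b) = (\<Sum>j\<in>A. b + (if j = i then a - b else 0))"
    by (rule sum.cong) auto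
  also have "\<dots> = real (card A) *\<^sub>R b + (a - b)"
    using assms by (simp add: sum.distrib sum_constant_scaleR)
  finally show ?thesis by (simp add: algebra_simps)
qed

lemma convex_inverse_scaleR_add_mem:
  assumes "convex X" "a \<in> X" "b \<in> X" "\<tau> \<ge> 0"
  shows "(1 / (1 + \<tau>)) *\<^sub>R (a + \<tau> *\<^sub>R b) \<in> X"
proof -
  have "(1 / (1 + \<tau>)) *\<^sub>R (a + \<tau> *\<^sub>R b) = (1 - \<tau> / (1 + \<tau>)) *\<^sub>R a + (\<tau> / (1 + \<tau>)) *\<^sub>R b"
    using assms(4) by (simp add: scaleR_add_right field_simps)
  then show ?thesis
    using convexD_alt[OF assms(1-3), of "\<tau> / (1 + \<tau>)"] assms(4) by simp
qed

lemma convex_on_imp_above_tangent_within: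
  fixes f :: "'a::real_normed_vector \<Rightarrow> real"
  assumes convex: "convex_on X f" and z: "z \<in> X" and y: "y \<in> X"
    and deriv: "(f has_derivative f') (at z within X)"
  shows "f z + f' (y - z) \<le> f y"
proof -
  define p where "p u = (1 - u) *\<^sub>R z + u *\<^sub>R y" for u :: real
  have lin: "linear f'" using deriv by (rule has_derivative_linear)
  have "p ` {0..1} \<subseteq> X"
    using convexD[OF convex_on_imp_convex[OF convex] z y] by (auto simp: p_def)
  moreover have "(p has_derivative (\<lambda>h. h *\<^sub>R (y - z))) (at 0 within {0..1})"
    unfolding p_def by (auto intro!: derivative_eq_intros simp: algebra_simps)
  moreover have "p 0 = z" by (simp add: p_def)
  ultimately have "((f \<circ> p) has_derivative (\<lambda>h. f' (h *\<^sub>R (y - z)))) (at 0 within {0..1})"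
    using has_derivative_in_compose[of p _ 0 "{0..1}" f f'] has_derivative_subset[OF deriv]
    by (simp add: o_def)
  moreover have "(\<lambda>h. f' (h *\<^sub>R (y - z))) = (*) (f' (y - z))"
    by (auto simp: fun_eq_iff linear_scale[OF lin])
  ultimately have "((f \<circ> p) has_field_derivative f' (y - z)) (at 0 within {0..1})"
    by (simp add: has_field_derivative_def)
  then have lim: "((\<lambda>u. ((f \<circ> p) u - (f \<circ> p) 0) / (u - 0)) \<longlongrightarrow> f' (y - z)) (at_right 0)"
    unfolding has_field_derivative_iff using at_within_Icc_at_right[of "0::real" 1] by simp
  have "eventually (\<lambda>u. u \<in> {0<..<1}) (at_right (0::real))"
    by (rule eventually_at_right_real) simp
  then have "eventually (\<lambda>u. ((f \<circ> p) u - (f \<circ> p) 0) / (u - 0) \<le> f y - f z) (at_right 0)"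
  proof eventually_elim
    case (elim u)
    then have "f (p u) \<le> (1 - u) * f z + u * f y"
      using convex_onD[OF convex, of u z y] z y by (simp add: p_def)
    with elim show ?case by (simp add: p_def field_simps)
  qed
  from tendsto_upperbound[OF lim this] show ?thesis by simp
qed

lemma weighted_telescope:
  fixes \<theta> r :: "nat \<Rightarrow> real" and U V :: "nat \<Rightarrow> 'v::real_vector"
  assumes "1 \<le> n"
    and weights: "\<And>t. t \<in> {2..n} \<Longrightarrow> \<theta> t * (r t - 1) = \<theta> (t - 1) * r (t - 1)"
    and recursion: "\<And>t. t \<in> {1..n} \<Longrightarrow> r t *\<^sub>R V t = U t + (r t - 1) *\<^sub>R V (t - 1)"
  shows "(\<theta> n * r n) *\<^sub>R V n = (\<Sum>t=1..n. \<theta> t *\<^sub>R U t) + (\<theta> 1 * (r 1 - 1)) *\<^sub>R V 0"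
  using assms
proof (induction n rule: nat_induct_at_least)
  case base
  then show ?case using base(2)[of 1] by (simp add: scaleR_add_right flip: scaleR_scaleR)
next
  case (Suc n)
  have "(\<theta> (Suc n) * r (Suc n)) *\<^sub>R V (Suc n) = \<theta> (Suc n) *\<^sub>R (U (Suc n) + (r (Suc n) - 1) *\<^sub>R V n)"
    using Suc.prems(2)[of "Suc n"] by (simp flip: scaleR_scaleR)
  also have "\<dots> = \<theta> (Suc n) *\<^sub>R U (Suc n) + (\<theta> n * r n) *\<^sub>R V n"
    using Suc.prems(1)[of "Suc n"] Suc.hyps by (simp add: scaleR_add_right)
  also have "(\<theta> n * r n) *\<^sub>R V n = (\<Sum>t=1..n. \<theta> t *\<^sub>R U t) + (\<theta> 1 * (r 1 - 1)) *\<^sub>R V 0"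
    using Suc by simp
  finally show ?case by (simp add: algebra_simps)
qed

lemma aggregated_linearization_bound:
  fixes xs :: "'p \<Rightarrow> nat \<Rightarrow> 'a::real_inner" and xl :: "'p \<Rightarrow> nat \<Rightarrow> nat \<Rightarrow> 'a"
    and \<theta> \<tau> :: "nat \<Rightarrow> real"
  assumes m: "m \<ge> 1" and k: "k \<ge> 1"
    and f_convex: "\<And>i. i \<in> {1..m} \<Longrightarrow> convex_on X (f i)"
    and f_grad: "\<And>i. i \<in> {1..m} \<Longrightarrow> (f i has_derivative (\<lambda>h. inner (a i) h)) (at x within X)"
    and x: "x \<in> X" and xl_mem: "\<And>\<sigma> i. \<sigma> \<in> P \<Longrightarrow> i \<in> {1..m} \<Longrightarrow> xl \<sigma> k i \<in> X"
    and xl_0: "\<And>\<sigma> i. \<sigma> \<in> P \<Longrightarrow> i \<in> {1..m} \<Longrightarrow> xl \<sigma> 0 i = x0"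
    and recursion: "\<And>t i. t \<in> {1..k} \<Longrightarrow> i \<in> {1..m} \<Longrightarrow>
          (real m * (1 + \<tau> t)) *\<^sub>R (\<Sum>\<sigma>\<in>P. xl \<sigma> t i)
          = (\<Sum>\<sigma>\<in>P. xs \<sigma> t) + (real m * (1 + \<tau> t) - 1) *\<^sub>R (\<Sum>\<sigma>\<in>P. xl \<sigma> (t - 1) i)"
    and weights: "\<And>t. t \<in> {2..k} \<Longrightarrow>
          \<theta> t * (real m * (1 + \<tau> t) - 1) = \<theta> (t - 1) * real m * (1 + \<tau> (t - 1))"
    and T_nonneg: "\<theta> k * (1 + \<tau> k) \<ge> 0"
  defines "g \<equiv> (1 / real m) *\<^sub>R (\<Sum>i=1..m. a i)" and "F \<equiv> (1 / real m) * (\<Sum>i=1..m. f i x)"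
  shows "(\<Sum>t=1..k. \<theta> t * (\<Sum>\<sigma>\<in>P. inner g (xs \<sigma> t - x) + F))
         \<le> \<theta> k * (1 + \<tau> k) * (\<Sum>i=1..m. \<Sum>\<sigma>\<in>P. f i (xl \<sigma> k i))
           - \<theta> 1 * (real m * (1 + \<tau> 1) - 1) * real (card P) * (inner (x0 - x) g + F)"
proof -
  define r where "r t = real m * (1 + \<tau> t)" for t
  define T where "T = \<theta> k * (1 + \<tau> k)"
  define c where "c = \<theta> 1 * (r 1 - 1)"
  define N where "N = real (card P)"
  define Xs where "Xs t = (\<Sum>\<sigma>\<in>P. xs \<sigma> t)" for t
  define Vk where "Vk = (\<Sum>i=1..m. inner (a i) (\<Sum>\<sigma>\<in>P. xl \<sigma> k i))"
  have m_pos: "real m > 0" using m by simp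
  have inner_g: "real m * inner g y = (\<Sum>i=1..m. inner (a i) y)" for y
    unfolding g_def using m_pos by (simp add: inner_sum_left)
  have mF: "real m * F = (\<Sum>i=1..m. f i x)"
    unfolding F_def using m_pos by simp
  have weights_r: "\<theta> t * (r t - 1) = \<theta> (t - 1) * r (t - 1)" if "t \<in> {2..k}" for t
    using weights[OF that] by (simp add: r_def)
  have mT: "real m * T = (\<Sum>t=1..k. \<theta> t) + c"
    using weighted_telescope[where \<theta> = \<theta> and r = r and U = "\<lambda>_. 1" and V = "\<lambda>_. 1::real", OF k weights_r]
    unfolding c_def T_def r_def by (simp add: algebra_simps)
  have "(real m * T) *\<^sub>R (\<Sum>\<sigma>\<in>P. xl \<sigma> k i) = (\<Sum>t=1..k. \<theta> t *\<^sub>R Xs t) + (c * N) *\<^sub>R x0"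
    if "i \<in> {1..m}" for i
  proof -
    have "(\<Sum>\<sigma>\<in>P. xl \<sigma> 0 i) = N *\<^sub>R x0"
      unfolding N_def using xl_0 that by (simp add: sum_constant_scaleR)
    then show ?thesis
      using weighted_telescope[where \<theta> = \<theta> and r = r and V = "\<lambda>t. \<Sum>\<sigma>\<in>P. xl \<sigma> t i" and U = Xs,
          OF k weights_r] recursion that
      unfolding c_def Xs_def r_def T_def by (simp add: mult.left_commute)
  qed
  then have "real m * (T * Vk) = (\<Sum>i=1..m. inner (a i) ((\<Sum>t=1..k. \<theta> t *\<^sub>R Xs t) + (c * N) *\<^sub>R x0))"
    unfolding Vk_def sum_distrib_left by (intro sum.cong) (simp_all flip: inner_scaleR_right)
  also have "\<dots> = real m * ((\<Sum>t=1..k. \<theta> t * inner g (Xs t)) + c * N * inner g x0)"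
    unfolding inner_g[symmetric] by (simp add: inner_add_right inner_sum_right)
  finally have "real m * (T * Vk) = real m * ((\<Sum>t=1..k. \<theta> t * inner g (Xs t)) + c * N * inner g x0)" .
  then have TV: "T * Vk = (\<Sum>t=1..k. \<theta> t * inner g (Xs t)) + c * N * inner g x0"
    using m_pos by simp
  have L: "(\<Sum>t=1..k. \<theta> t * (\<Sum>\<sigma>\<in>P. inner g (xs \<sigma> t - x) + F))
      = (\<Sum>t=1..k. \<theta> t * inner g (Xs t)) + (\<Sum>t=1..k. \<theta> t) * (N * (F - inner g x))"
    unfolding Xs_def N_def
    by (simp add: sum.distrib sum_subtractf inner_diff_right inner_sum_right sum_distrib_left
        sum_distrib_right algebra_simps)
  have "f i x + inner (a i) (xl \<sigma> k i - x) \<le> f i (xl \<sigma> k i)" if "i \<in> {1..m}" "\<sigma> \<in> P" for i \<sigma>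
    using convex_on_imp_above_tangent_within[OF f_convex x xl_mem f_grad] that by simp
  then have "(\<Sum>i=1..m. \<Sum>\<sigma>\<in>P. f i x + inner (a i) (xl \<sigma> k i - x)) \<le> (\<Sum>i=1..m. \<Sum>\<sigma>\<in>P. f i (xl \<sigma> k i))"
    by (intro sum_mono) auto
  moreover have "(\<Sum>i=1..m. \<Sum>\<sigma>\<in>P. f i x + inner (a i) (xl \<sigma> k i - x))
      = N * (\<Sum>i=1..m. f i x) - N * (\<Sum>i=1..m. inner (a i) x) + Vk"
    unfolding Vk_def N_def
    by (simp add: sum.distrib inner_diff_right inner_sum_right sum_subtractf algebra_simps sum_distrib_left)
  ultimately have conv: "N * (real m * (F - inner g x)) + Vk \<le> (\<Sum>i=1..m. \<Sum>\<sigma>\<in>P. f i (xl \<sigma> k i))"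
    unfolding mF[symmetric] inner_g[symmetric] by (simp add: algebra_simps)
  have "T * (N * (real m * (F - inner g x))) = ((\<Sum>t=1..k. \<theta> t) + c) * (N * (F - inner g x))"
    unfolding mT[symmetric] by (simp add: algebra_simps)
  then have "T * (N * (real m * (F - inner g x))) + T * Vk
      = (\<Sum>t=1..k. \<theta> t * (\<Sum>\<sigma>\<in>P. inner g (xs \<sigma> t - x) + F)) + c * N * (inner (x0 - x) g + F)"
    unfolding L TV by (simp add: inner_diff_left inner_commute algebra_simps)
  moreover have "T * (N * (real m * (F - inner g x))) + T * Vk \<le> T * (\<Sum>i=1..m. \<Sum>\<sigma>\<in>P. f i (xl \<sigma> k i))"
    using mult_left_mono[OF conv T_nonneg[folded T_def]] by (simp add: algebra_simps)
  ultimately show ?thesis unfolding T_def c_def r_def N_def by linarith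
qed

lemma integral_weighted_sums_le:
  fixes L R :: "'i \<Rightarrow> 's \<Rightarrow> real" and F :: "'j \<Rightarrow> 's \<Rightarrow> real" and \<theta> :: "'i \<Rightarrow> real"
  assumes S: "prob_space S" and I: "finite I" and J: "finite J"
    and int_L: "\<And>t. t \<in> I \<Longrightarrow> integrable S (L t)"
    and int_R: "\<And>t. t \<in> I \<Longrightarrow> integrable S (R t)"
    and int_F: "\<And>j. j \<in> J \<Longrightarrow> integrable S (F j)"
    and pointwise: "\<And>s. (\<Sum>t\<in>I. \<theta> t * (L t s - R t s)) \<le> T * (\<Sum>j\<in>J. F j s) - C"
  shows "(\<Sum>t\<in>I. \<theta> t * integral\<^sup>L S (L t))
         \<le> T * (\<Sum>j\<in>J. integral\<^sup>L S (F j)) + (\<Sum>t\<in>I. \<theta> t * integral\<^sup>L S (R t)) - C"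
proof -
  interpret prob_space S by (rule S)
  have int_LR: "integrable S (\<lambda>s. \<Sum>t\<in>I. \<theta> t * (L t s - R t s))"
    using int_L int_R by (auto intro!: Bochner_Integration.integrable_sum integrable_mult_right
      Bochner_Integration.integrable_diff)
  have int_rhs: "integrable S (\<lambda>s. T * (\<Sum>j\<in>J. F j s) - C)"
    using int_F by (auto intro!: Bochner_Integration.integrable_diff integrable_mult_right
      Bochner_Integration.integrable_sum)
  have "(\<Sum>t\<in>I. \<theta> t * (integral\<^sup>L S (L t) - integral\<^sup>L S (R t)))
      = integral\<^sup>L S (\<lambda>s. \<Sum>t\<in>I. \<theta> t * (L t s - R t s))"
    using int_L int_R by (simp add: Bochner_Integration.integral_sum)
  also have "\<dots> \<le> integral\<^sup>L S (\<lambda>s. T * (\<Sum>j\<in>J. F j s) - C)"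
    using int_LR int_rhs pointwise by (rule integral_mono)
  also have "\<dots> = T * (\<Sum>j\<in>J. integral\<^sup>L S (F j)) - C"
    using int_F by (simp add: Bochner_Integration.integral_sum prob_space)
  finally show ?thesis
    by (simp add: right_diff_distrib sum_subtractf)
qed

lemma prox_map_mem:
  assumes "\<exists>z\<in>X. \<forall>u\<in>X. prox_obj \<mu> w w' g z0 \<eta> z \<le> prox_obj \<mu> w w' g z0 \<eta> u"
  shows "prox_map X \<mu> w w' g z0 \<eta> \<in> X"
  using someI_ex[OF assms[unfolded Bex_def]] unfolding prox_map_def by blast

context
  fixes X :: "'a::real_inner set" and \<mu> :: real and w :: "'a \<Rightarrow> real" and w' :: "'a \<Rightarrow> 'a"
    and m :: nat and grad :: "nat \<Rightarrow> 'a \<Rightarrow> 'a" and stoch :: bool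
    and G :: "nat \<Rightarrow> 'a \<Rightarrow> 'b \<Rightarrow> 'a" and B :: "nat \<Rightarrow> nat"
    and \<xi> :: "nat \<Rightarrow> nat \<Rightarrow> nat \<Rightarrow> 's \<Rightarrow> 'b" and \<alpha> \<eta> \<tau> :: "nat \<Rightarrow> real" and x0 :: 'a
begin

abbreviation "rgem \<equiv> rgem_state X \<mu> w w' m grad stoch G B \<xi> \<alpha> \<eta> \<tau> x0"
abbreviation "rgem_x \<sigma> s t \<equiv> fst (rgem \<sigma> s t)"
abbreviation "rgem_xl \<sigma> s t \<equiv> fst (snd (rgem \<sigma> s t))"

lemma rgem_state_cong: "(\<And>u. u \<le> t \<Longrightarrow> \<sigma> u = \<sigma>' u) \<Longrightarrow> rgem \<sigma> s t = rgem \<sigma>' s t"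
proof (induction t)
  case (Suc t)
  then have "rgem \<sigma> s t = rgem \<sigma>' s t" "\<sigma> (Suc t) = \<sigma>' (Suc t)" by auto
  then show ?case by (simp only: rgem_state.simps(2))
qed simp

lemma rgem_x_Suc: "\<exists>g. rgem_x \<sigma> s (Suc t) = prox_map X \<mu> w w' g (rgem_x \<sigma> s t) (\<eta> (Suc t))"
  by (simp add: Let_def split: prod.split) blast

lemma rgem_x_Suc_fun_upd: "rgem_x (\<sigma>(Suc t := j)) s (Suc t) = rgem_x \<sigma> s (Suc t)"
proof -
  have "rgem (\<sigma>(Suc t := j)) s t = rgem \<sigma> s t" by (rule rgem_state_cong) simp
  then show ?thesis by (simp add: Let_def split: prod.split)
qed

lemma rgem_xl_Suc:
  "rgem_xl \<sigma> s (Suc t) = (rgem_xl \<sigma> s t)(\<sigma> (Suc t) :=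
     (1 / (1 + \<tau> (Suc t))) *\<^sub>R (rgem_x \<sigma> s (Suc t) + \<tau> (Suc t) *\<^sub>R rgem_xl \<sigma> s t (\<sigma> (Suc t))))"
  by (simp add: Let_def split: prod.split)

lemma rgem_iterates_mem:
  assumes "convex X" "x0 \<in> X"
    and prox_wd: "\<And>t g z0. t \<in> {1..k} \<Longrightarrow> z0 \<in> X \<Longrightarrow>
                    \<exists>z\<in>X. \<forall>u\<in>X. prox_obj \<mu> w w' g z0 (\<eta> t) z \<le> prox_obj \<mu> w w' g z0 (\<eta> t) u"
    and \<tau>: "\<And>t. t \<in> {1..k} \<Longrightarrow> \<tau> t \<ge> 0"
  shows "t \<le> k \<Longrightarrow> rgem_x \<sigma> s t \<in> X \<and> (\<forall>i. rgem_xl \<sigma> s t i \<in> X)"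
proof (induction t)
  case (Suc t)
  then have IH: "rgem_x \<sigma> s t \<in> X" "\<And>i. rgem_xl \<sigma> s t i \<in> X" by auto
  obtain g where g: "rgem_x \<sigma> s (Suc t) = prox_map X \<mu> w w' g (rgem_x \<sigma> s t) (\<eta> (Suc t))"
    using rgem_x_Suc by blast
  have x: "rgem_x \<sigma> s (Suc t) \<in> X"
    unfolding g using Suc.prems IH by (intro prox_map_mem prox_wd) auto
  have "(1 / (1 + \<tau> (Suc t))) *\<^sub>R (rgem_x \<sigma> s (Suc t) + \<tau> (Suc t) *\<^sub>R rgem_xl \<sigma> s t i) \<in> X" for i
    using Suc.prems by (intro convex_inverse_scaleR_add_mem assms(1) x IH(2) \<tau>) auto
  then have "rgem_xl \<sigma> s (Suc t) i \<in> X" for i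
    using IH(2) unfolding rgem_xl_Suc fun_upd_apply by (simp del: rgem_state.simps)
  with x show ?case by blast
qed (use assms(2) in simp)

lemma rgem_sum_index_xl:
  assumes i: "i \<in> {1..m}" and \<tau>: "\<tau> (Suc t) \<ge> 0"
  shows "(real m * (1 + \<tau> (Suc t))) *\<^sub>R (\<Sum>j\<in>{1..m}. rgem_xl (\<sigma>(Suc t := j)) s (Suc t) i)
       = (\<Sum>j\<in>{1..m}. rgem_x (\<sigma>(Suc t := j)) s (Suc t))
         + (real m * (1 + \<tau> (Suc t)) - 1) *\<^sub>R (\<Sum>j\<in>{1..m}. rgem_xl (\<sigma>(Suc t := j)) s t i)"
proof -
  define r where "r = real m * (1 + \<tau> (Suc t))"
  define x where "x = rgem_x \<sigma> s (Suc t)"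
  define b where "b = rgem_xl \<sigma> s t i"
  have x_upd: "rgem_x (\<sigma>(Suc t := j)) s (Suc t) = x" for j
    unfolding x_def by (rule rgem_x_Suc_fun_upd)
  have b_upd: "rgem_xl (\<sigma>(Suc t := j)) s t i = b" for j
    unfolding b_def using rgem_state_cong[of t "\<sigma>(Suc t := j)" \<sigma> s] by (simp del: rgem_state.simps)
  have "rgem_xl (\<sigma>(Suc t := j)) s (Suc t) i
      = (if j = i then (1 / (1 + \<tau> (Suc t))) *\<^sub>R (x + \<tau> (Suc t) *\<^sub>R b) else b)" for j
    using x_upd[of j] b_upd unfolding rgem_xl_Suc by (auto simp del: rgem_state.simps)
  then have "(\<Sum>j\<in>{1..m}. rgem_xl (\<sigma>(Suc t := j)) s (Suc t) i)
      = (1 / (1 + \<tau> (Suc t))) *\<^sub>R (x + \<tau> (Suc t) *\<^sub>R b) + (real m - 1) *\<^sub>R b"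
    using sum_if_eq_else_const[OF i, of "(1 / (1 + \<tau> (Suc t))) *\<^sub>R (x + \<tau> (Suc t) *\<^sub>R b)" b]
    by (simp del: rgem_state.simps)
  then have "r *\<^sub>R (\<Sum>j\<in>{1..m}. rgem_xl (\<sigma>(Suc t := j)) s (Suc t) i)
      = r *\<^sub>R ((1 / (1 + \<tau> (Suc t))) *\<^sub>R (x + \<tau> (Suc t) *\<^sub>R b) + (real m - 1) *\<^sub>R b)"
    by (simp only:)
  also have "\<dots> = real m *\<^sub>R (x + \<tau> (Suc t) *\<^sub>R b) + (r * (real m - 1)) *\<^sub>R b"
    using \<tau> unfolding r_def by (simp only: scaleR_add_right scaleR_scaleR) simp
  also have "\<dots> = real m *\<^sub>R x + (r - 1) *\<^sub>R (real m *\<^sub>R b)"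
    unfolding r_def by (simp add: algebra_simps)
  finally show ?thesis
    unfolding r_def by (simp add: x_upd b_upd sum_constant_scaleR del: rgem_state.simps)
qed

lemma rgem_sum_paths_xl:
  assumes t: "t \<in> {1..k}" and i: "i \<in> {1..m}" and \<tau>: "\<tau> t \<ge> 0"
  defines "P \<equiv> {1..k} \<rightarrow>\<^sub>E {1..m}"
  shows "(real m * (1 + \<tau> t)) *\<^sub>R (\<Sum>\<sigma>\<in>P. rgem_xl \<sigma> s t i)
       = (\<Sum>\<sigma>\<in>P. rgem_x \<sigma> s t) + (real m * (1 + \<tau> t) - 1) *\<^sub>R (\<Sum>\<sigma>\<in>P. rgem_xl \<sigma> s (t - 1) i)"
proof -
  obtain t' where t': "t = Suc t'" using t by (cases t) auto
  let ?Q = "({1..k} - {t}) \<rightarrow>\<^sub>E {1..m}"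
  have split: "(\<Sum>\<sigma>\<in>P. H \<sigma>) = (\<Sum>g\<in>?Q. \<Sum>j\<in>{1..m}. H (g(t := j)))" for H :: "_ \<Rightarrow> 'a"
    unfolding P_def using t by (intro sum_PiE_split_coord) auto
  have "(real m * (1 + \<tau> t)) *\<^sub>R (\<Sum>\<sigma>\<in>P. rgem_xl \<sigma> s t i)
      = (\<Sum>g\<in>?Q. (real m * (1 + \<tau> t)) *\<^sub>R (\<Sum>j\<in>{1..m}. rgem_xl (g(t := j)) s t i))"
    by (simp only: split scaleR_sum_right)
  also have "\<dots> = (\<Sum>g\<in>?Q. (\<Sum>j\<in>{1..m}. rgem_x (g(t := j)) s t)
      + (real m * (1 + \<tau> t) - 1) *\<^sub>R (\<Sum>j\<in>{1..m}. rgem_xl (g(t := j)) s (t - 1) i))"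
    using rgem_sum_index_xl[OF i] \<tau> unfolding t' by (simp del: rgem_state.simps)
  also have "\<dots> = (\<Sum>\<sigma>\<in>P. rgem_x \<sigma> s t) + (real m * (1 + \<tau> t) - 1) *\<^sub>R (\<Sum>\<sigma>\<in>P. rgem_xl \<sigma> s (t - 1) i)"
    by (simp only: split sum.distrib scaleR_sum_right)
  finally show ?thesis .
qed

lemma rgem_paths_linearization_bound:
  assumes X: "convex X" and m: "m \<ge> 1" and k: "k \<ge> 1"
    and f_convex: "\<And>i. i \<in> {1..m} \<Longrightarrow> convex_on X (f i)"
    and f_grad: "\<And>i. i \<in> {1..m} \<Longrightarrow> (f i has_derivative (\<lambda>h. inner (grad i x) h)) (at x within X)"
    and x: "x \<in> X" and x0: "x0 \<in> X"
    and prox_wd: "\<And>t g z0. t \<in> {1..k} \<Longrightarrow> z0 \<in> X \<Longrightarrow>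
                    \<exists>z\<in>X. \<forall>u\<in>X. prox_obj \<mu> w w' g z0 (\<eta> t) z \<le> prox_obj \<mu> w w' g z0 (\<eta> t) u"
    and \<tau>: "\<And>t. t \<in> {1..k} \<Longrightarrow> \<tau> t \<ge> 0"
    and weights: "\<And>t. t \<in> {2..k} \<Longrightarrow>
          \<theta> t * (real m * (1 + \<tau> t) - 1) = \<theta> (t - 1) * real m * (1 + \<tau> (t - 1))"
    and \<theta>_k: "\<theta> k \<ge> 0"
  defines "P \<equiv> {1..k} \<rightarrow>\<^sub>E {1..m}"
    and "g \<equiv> (1 / real m) *\<^sub>R (\<Sum>i=1..m. grad i x)" and "F \<equiv> (1 / real m) * (\<Sum>i=1..m. f i x)"
  shows "(\<Sum>t=1..k. \<theta> t * (\<Sum>\<sigma>\<in>P. inner g (rgem_x \<sigma> s t - x) + F))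
         \<le> \<theta> k * (1 + \<tau> k) * (\<Sum>i=1..m. \<Sum>\<sigma>\<in>P. f i (rgem_xl \<sigma> s k i))
           - \<theta> 1 * (real m * (1 + \<tau> 1) - 1) * real m ^ k * (inner (x0 - x) g + F)"
proof -
  have "real (card P) = real m ^ k"
    unfolding P_def by (simp add: card_PiE)
  moreover have "(\<Sum>t=1..k. \<theta> t * (\<Sum>\<sigma>\<in>P. inner g (rgem_x \<sigma> s t - x) + F))
      \<le> \<theta> k * (1 + \<tau> k) * (\<Sum>i=1..m. \<Sum>\<sigma>\<in>P. f i (rgem_xl \<sigma> s k i))
        - \<theta> 1 * (real m * (1 + \<tau> 1) - 1) * real (card P) * (inner (x0 - x) g + F)"
    unfolding g_def F_def
  proof (rule aggregated_linearization_bound[where xl = "\<lambda>\<sigma>. rgem_xl \<sigma> s"])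
    show "rgem_xl \<sigma> s k i \<in> X" for \<sigma> i
      using rgem_iterates_mem[OF X x0 prox_wd \<tau>, of k] by blast
    show "(real m * (1 + \<tau> t)) *\<^sub>R (\<Sum>\<sigma>\<in>P. rgem_xl \<sigma> s t i)
        = (\<Sum>\<sigma>\<in>P. rgem_x \<sigma> s t) + (real m * (1 + \<tau> t) - 1) *\<^sub>R (\<Sum>\<sigma>\<in>P. rgem_xl \<sigma> s (t - 1) i)"
      if "t \<in> {1..k}" "i \<in> {1..m}" for t i
      unfolding P_def using that \<tau> by (intro rgem_sum_paths_xl) auto
  qed (use m k f_convex f_grad x weights \<theta>_k \<tau>[of k] in auto)
  ultimately show ?thesis by simp
qed

end

theorem lemma4p2:
  fixes X :: "'a::euclidean_space set"
    and m k :: nat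
    and f :: "nat \<Rightarrow> 'a \<Rightarrow> real" and grad :: "nat \<Rightarrow> 'a \<Rightarrow> 'a"
    and \<mu> :: real and w :: "'a \<Rightarrow> real" and w' :: "'a \<Rightarrow> 'a"
    and stoch :: bool
    and S :: "'s measure" and D :: "nat \<Rightarrow> 'b measure"
    and \<xi> :: "nat \<Rightarrow> nat \<Rightarrow> nat \<Rightarrow> 's \<Rightarrow> 'b" and G :: "nat \<Rightarrow> 'a \<Rightarrow> 'b \<Rightarrow> 'a"
    and B :: "nat \<Rightarrow> nat"
    and \<alpha> \<eta> \<tau> \<theta> :: "nat \<Rightarrow> real"
    and x0 x :: "'a"
    and xs :: "(nat \<Rightarrow> nat) \<Rightarrow> 's \<Rightarrow> nat \<Rightarrow> 'a"
    and xl :: "(nat \<Rightarrow> nat) \<Rightarrow> 's \<Rightarrow> nat \<Rightarrow> nat \<Rightarrow> 'a"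
  defines "xs \<equiv> (\<lambda>\<sigma> s t. fst (rgem_state X \<mu> w w' m grad stoch G B \<xi> \<alpha> \<eta> \<tau> x0 \<sigma> s t))"
    and "xl \<equiv> (\<lambda>\<sigma> s t. fst (snd (rgem_state X \<mu> w w' m grad stoch G B \<xi> \<alpha> \<eta> \<tau> x0 \<sigma> s t)))"
  assumes X: "closed X" "convex X"
    and m: "m \<ge> 1" and k: "k \<ge> 1"
    and f_convex: "\<And>i. i \<in> {1..m} \<Longrightarrow> convex_on X (f i)"
    and f_grad: "\<And>i z. i \<in> {1..m} \<Longrightarrow> z \<in> X \<Longrightarrow>
                   (f i has_derivative (\<lambda>h. inner (grad i z) h)) (at z within X)"
    and \<mu>: "\<mu> \<ge> 0"
    and w_sc: "strongly_convex_mod X w 1"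
    and w'_sub: "\<And>z y. z \<in> X \<Longrightarrow> y \<in> X \<Longrightarrow> w y \<ge> w z + inner (w' z) (y - z)"
    and prox_wd: "\<And>t g z0. t \<in> {1..k} \<Longrightarrow> z0 \<in> X \<Longrightarrow>
                    \<exists>z\<in>X. \<forall>u\<in>X. prox_obj \<mu> w w' g z0 (\<eta> t) z \<le> prox_obj \<mu> w w' g z0 (\<eta> t) u"
    and S: "prob_space S"
    and samples_indep: "prob_space.indep_vars S (\<lambda>(t, i, j). D i) (\<lambda>(t, i, j). \<xi> t i j)
                          {(t, i, j). t \<in> {1..k} \<and> i \<in> {1..m} \<and> j \<in> {1..B t}}"
    and samples_distr: "\<And>t i j. t \<in> {1..k} \<Longrightarrow> i \<in> {1..m} \<Longrightarrow> j \<in> {1..B t} \<Longrightarrow>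
                          distr S (D i) (\<xi> t i j) = D i"
    and G_unbiased: "\<And>i z. i \<in> {1..m} \<Longrightarrow> z \<in> X \<Longrightarrow>
                   integrable (D i) (G i z) \<and> (\<integral>\<zeta>. G i z \<zeta> \<partial>D i) = grad i z"
    and B: "\<And>t. t \<in> {1..k} \<Longrightarrow> B t \<ge> 1"
    and params: "\<And>t. t \<in> {1..k} \<Longrightarrow> \<alpha> t \<ge> 0 \<and> \<eta> t \<ge> 0 \<and> \<tau> t \<ge> 0"
    and x0: "x0 \<in> X" and x: "x \<in> X"
    and \<theta>_nonneg: "\<And>t. t \<in> {1..k} \<Longrightarrow> \<theta> t \<ge> 0"
    and \<theta>_rel: "\<And>t. t \<in> {2..k} \<Longrightarrow>
                  \<theta> t * (real m * (1 + \<tau> t) - 1) = \<theta> (t - 1) * real m * (1 + \<tau> (t - 1))"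
    and int_x: "\<And>\<sigma> t. \<sigma> \<in> {1..k} \<rightarrow>\<^sub>E {1..m} \<Longrightarrow> t \<in> {1..k} \<Longrightarrow>
                  integrable S (\<lambda>s. inner ((1 / real m) *\<^sub>R (\<Sum>i=1..m. grad i x)) (xs \<sigma> s t))"
    and int_w: "\<And>\<sigma> t. \<sigma> \<in> {1..k} \<rightarrow>\<^sub>E {1..m} \<Longrightarrow> t \<in> {1..k} \<Longrightarrow>
                  integrable S (\<lambda>s. w (xs \<sigma> s t))"
    and int_f: "\<And>\<sigma> i. \<sigma> \<in> {1..k} \<rightarrow>\<^sub>E {1..m} \<Longrightarrow> i \<in> {1..m} \<Longrightarrow>
                  integrable S (\<lambda>s. f i (xl \<sigma> s k i))"
  shows
    "(\<Sum>t=1..k. \<theta> t * rgem_expect S m k (\<lambda>\<sigma> s.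
         inner ((1 / real m) *\<^sub>R (\<Sum>i=1..m. grad i x)) (xs \<sigma> s t - x) + \<mu> * w (xs \<sigma> s t) - \<mu> * w x))
     \<le> \<theta> k * (1 + \<tau> k) * (\<Sum>i=1..m. rgem_expect S m k (\<lambda>\<sigma> s. f i (xl \<sigma> s k i)))
       + (\<Sum>t=1..k. \<theta> t * rgem_expect S m k (\<lambda>\<sigma> s.
            \<mu> * w (xs \<sigma> s t) - ((1 / real m) * (\<Sum>i=1..m. f i x) + \<mu> * w x)))
       - \<theta> 1 * (real m * (1 + \<tau> 1) - 1) *
           (inner (x0 - x) ((1 / real m) *\<^sub>R (\<Sum>i=1..m. grad i x)) + (1 / real m) * (\<Sum>i=1..m. f i x))"
proof -
  interpret S: prob_space S by (rule S)
  define P where "P = {1..k} \<rightarrow>\<^sub>E {1..m}"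
  define g where "g = (1 / real m) *\<^sub>R (\<Sum>i=1..m. grad i x)"
  define F where "F = (1 / real m) * (\<Sum>i=1..m. f i x)"
  define C where "C = \<theta> 1 * (real m * (1 + \<tau> 1) - 1) * (inner (x0 - x) g + F)"
  define Lf where "Lf t s = (\<Sum>\<sigma>\<in>P. inner g (xs \<sigma> s t - x) + \<mu> * w (xs \<sigma> s t) - \<mu> * w x) / real m ^ k" for t s
  define Rf where "Rf t s = (\<Sum>\<sigma>\<in>P. \<mu> * w (xs \<sigma> s t) - (F + \<mu> * w x)) / real m ^ k" for t s
  define Ff where "Ff i s = (\<Sum>\<sigma>\<in>P. f i (xl \<sigma> s k i)) / real m ^ k" for i s
  have "(\<Sum>t=1..k. \<theta> t * (Lf t s - Rf t s)) \<le> \<theta> k * (1 + \<tau> k) * (\<Sum>i=1..m. Ff i s) - C" for s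
  proof -
    have "Lf t s - Rf t s = (\<Sum>\<sigma>\<in>P. inner g (xs \<sigma> s t - x) + F) / real m ^ k" for t
      unfolding Lf_def Rf_def diff_divide_distrib[symmetric] sum_subtractf[symmetric] by simp
    moreover have "(\<Sum>t=1..k. \<theta> t * (\<Sum>\<sigma>\<in>P. inner g (xs \<sigma> s t - x) + F))
        \<le> \<theta> k * (1 + \<tau> k) * (\<Sum>i=1..m. \<Sum>\<sigma>\<in>P. f i (xl \<sigma> s k i))
          - \<theta> 1 * (real m * (1 + \<tau> 1) - 1) * real m ^ k * (inner (x0 - x) g + F)"
      unfolding xs_def xl_def P_def g_def F_def
      by (rule rgem_paths_linearization_bound)
        (use X(2) m k f_convex f_grad x x0 prox_wd params \<theta>_rel \<theta>_nonneg in auto)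
    ultimately show ?thesis
      using m by (simp add: Ff_def C_def sum_distrib_left sum_divide_distrib[symmetric] field_simps)
  qed
  then have "(\<Sum>t=1..k. \<theta> t * integral\<^sup>L S (Lf t))
      \<le> \<theta> k * (1 + \<tau> k) * (\<Sum>i=1..m. integral\<^sup>L S (Ff i)) + (\<Sum>t=1..k. \<theta> t * integral\<^sup>L S (Rf t)) - C"
    using int_x int_w int_f unfolding Lf_def Rf_def Ff_def P_def g_def
    by (intro integral_weighted_sums_le S) (auto simp: inner_diff_right)
  then show ?thesis
    unfolding rgem_expect_def Lf_def Rf_def Ff_def P_def g_def F_def C_def .
qed

end
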